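(* Let $I$ be an interval and let $a(t,x)$, $\eta(t,x)$ be real functions on $I\times\mathbf{R}^d$ with $\nabla\eta\in L^\infty(I\times\mathbf{R}^d)$, $a\in L^\infty(I\times\mathbf{R}^d)$ and $a\ge c>0$. Set $\mathcal U(t,x,\xi)=(1+|\nabla\eta|^2)|\xi|^2-(\xi\cdot\nabla\eta)^2$ and $\gamma=(a^2\mathcal U)^{1/4}$. Then there exists $c_0>0$ such that $|\det\operatorname{Hess}_\xi\gamma(t,x,\xi)|\ge c_0$ for all $t\in I$, $x\in\mathbf{R}^d$, $\xi\in\mathcal C_0=\{\frac12\le|\xi|\le2\}$.
   Context: $\operatorname{Hess}_\xi\gamma=\big(\partial^2\gamma/\partial\xi_j\partial\xi_k\big)_{j,k}$. *)

theory Defs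
  imports "HOL-Analysis.Analysis"
begin

definition partial_deriv :: "'d::finite \<Rightarrow> (real^'d \<Rightarrow> real) \<Rightarrow> real^'d \<Rightarrow> real" where
  "partial_deriv j f \<xi> = deriv (\<lambda>s. f (\<xi> + s *\<^sub>R axis j 1)) 0"

definition hessian :: "(real^'d::finite \<Rightarrow> real) \<Rightarrow> real^'d \<Rightarrow> real^'d^'d" where
  "hessian f \<xi> = (\<chi> j k. partial_deriv j (partial_deriv k f) \<xi>)"

definition grad :: "(real^'d::finite \<Rightarrow> real) \<Rightarrow> real^'d \<Rightarrow> real^'d" where
  "grad f x = (\<chi> i. partial_deriv i f x)"

definition U_sym :: "(real \<Rightarrow> real^'d::finite \<Rightarrow> real) \<Rightarrow> real \<Rightarrow> real^'d \<Rightarrow> real^'d \<Rightarrow> real" where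
  "U_sym \<eta> t x \<xi> = (1 + (norm (grad (\<eta> t) x))\<^sup>2) * (norm \<xi>)\<^sup>2 - (\<xi> \<bullet> grad (\<eta> t) x)\<^sup>2"

definition gamma_sym :: "(real \<Rightarrow> real^'d::finite \<Rightarrow> real) \<Rightarrow> (real \<Rightarrow> real^'d \<Rightarrow> real)
     \<Rightarrow> real \<Rightarrow> real^'d \<Rightarrow> real^'d \<Rightarrow> real" where
  "gamma_sym a \<eta> t x \<xi> = ((a t x)\<^sup>2 * U_sym \<eta> t x \<xi>) powr (1/4)"

end

theory Submission
  imports Defs
begin

text \<open>
  For fixed t and x, gamma is Q^(1/4) for the positive definite quadratic form
  Q(xi) = xi . S xi with S = a^2 ((1 + |grad eta|^2) I - grad eta grad eta^T).
  For any such form the Hessian of Q^p is 2p Q^(p-1) (S + 2(p-1)/Q (S xi)(S xi)^T), so by the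
  matrix determinant lemma its determinant is (2p Q^(p-1))^d (2p - 1) det S; for p = 1/4 the
  factor 2p - 1 = -1/2 does not vanish. Finally det S = a^(2d) (1 + |grad eta|^2)^(d-1) >= c^(2d),
  and Q <= a^2 (1 + |grad eta|^2) |xi|^2 is bounded on the annulus, which bounds Q^(-3/4) below.
\<close>

definition outer_prod :: "real^'m \<Rightarrow> real^'n \<Rightarrow> real^'n^'m" where
  "outer_prod u w = (\<chi> i j. u$i * w$j)"

lemma outer_prod_mult_vec: "outer_prod u w *v x = (w \<bullet> x) *\<^sub>R u"
  by (simp add: outer_prod_def matrix_vector_mult_def vec_eq_iff inner_vec_def
      sum_distrib_left mult_ac)

lemma matrix_mul_outer_prod: "A ** outer_prod u w = outer_prod (A *v u) w"
  by (simp add: outer_prod_def matrix_matrix_mult_def matrix_vector_mult_def vec_eq_iff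
      sum_distrib_right mult.assoc)

lemma scaleR_outer_prod: "c *\<^sub>R outer_prod u w = outer_prod (c *\<^sub>R u) w"
  by (simp add: outer_prod_def vec_eq_iff)

lemma det_scaleR: "det (c *\<^sub>R (A :: real^'n::finite^'n)) = c ^ CARD('n) * det A"
proof -
  have "c *\<^sub>R A = (\<chi> i. c *s A $ i)" by (simp add: vec_eq_iff)
  then show ?thesis using det_rows_mul[of "\<lambda>_. c" "\<lambda>i. A $ i"] by simp
qed

lemma det_mat_1_replace_row:
  fixes w :: "real^'n::finite"
  shows "det (\<chi> i. if i = z then w else axis i 1) = w $ z"
proof -
  have "det (\<chi> i. if i = z then w else axis i 1) =
        det (\<chi> i. if i = z then \<Sum>j\<in>UNIV. w $ j *s axis j 1 else axis i (1::real))"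
    by (simp only: basis_expansion)
  also have "\<dots> = (\<Sum>j\<in>UNIV. w $ j * det (\<chi> i. if i = z then axis j 1 else axis i (1::real)))"
    by (simp add: det_linear_row_sum det_row_mul)
  also have "\<dots> = (\<Sum>j\<in>UNIV. if j = z then w $ j else 0)"
  proof (rule sum.cong)
    fix j
    have "det ((\<chi> i. if i = z then axis j 1 else axis i 1) :: real^'n^'n) = (if j = z then 1 else 0)"
    proof (cases "j = z")
      case True
      then have "((\<chi> i. if i = z then axis j 1 else axis i 1) :: real^'n^'n) = mat 1"
        by (simp add: vec_eq_iff mat_def axis_def)
      then show ?thesis using True by simp
    next
      case False
      then show ?thesis
        by (simp, intro det_identical_rows[of z j]) (auto simp: row_def)
    qed
    then show "w $ j * det ((\<chi> i. if i = z then axis j 1 else axis i 1) :: real^'n^'n) =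
        (if j = z then w $ j else 0)" by simp
  qed simp
  finally show ?thesis by simp
qed

lemma det_rank_one_rows_replace_row:
  fixes w u :: "real^'n::finite"
  assumes "finite T" "z \<notin> T"
  shows "det (\<chi> i. if i = z then w else if i \<in> T then axis i 1 + u$i *s w else axis i 1) = w $ z"
  \<comment> \<open>subtracting u_i times row z from each row i in T removes the rank-one part\<close>
  using assms
proof (induction T rule: finite_induct)
  case empty
  then show ?case using det_mat_1_replace_row[of z w] by (simp cong: if_cong)
next
  case (insert y T)
  let ?A = "(\<chi> i. if i = z then w else if i \<in> T then axis i 1 + u$i *s w else axis i 1) :: real^'n^'n"
  have "y \<noteq> z" using insert by auto
  then have "det (\<chi> k. if k = y then row y ?A + u$y *s row z ?A else row k ?A) = det ?A"
    by (rule det_row_operation)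
  moreover have "(\<chi> k. if k = y then row y ?A + u$y *s row z ?A else row k ?A) =
      (\<chi> i. if i = z then w else if i \<in> insert y T then axis i 1 + u$i *s w else axis i 1)"
    using insert \<open>y \<noteq> z\<close> by (auto simp: vec_eq_iff row_def)
  ultimately show ?case using insert by simp
qed

lemma det_rank_one_rows:
  fixes w u :: "real^'n::finite"
  assumes "finite T"
  shows "det (\<chi> i. if i \<in> T then axis i 1 + u$i *s w else axis i 1) = 1 + (\<Sum>i\<in>T. u$i * w$i)"
  using assms
proof (induction T rule: finite_induct)
  case empty
  have "((\<chi> i. axis i 1) :: real^'n^'n) = mat 1"
    by (simp add: vec_eq_iff mat_def axis_def)
  then show ?case by simp
next
  case (insert z T)
  let ?r = "\<lambda>i. if i \<in> T then axis i 1 + u$i *s w else (axis i 1 :: real^'n)"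
  have "((\<chi> i. if i \<in> insert z T then axis i 1 + u$i *s w else axis i 1) :: real^'n^'n) =
        (\<chi> i. if i = z then axis i 1 + u$i *s w else ?r i)"
    by (auto simp: vec_eq_iff)
  then have "det ((\<chi> i. if i \<in> insert z T then axis i 1 + u$i *s w else axis i 1) :: real^'n^'n) =
      det ((\<chi> i. if i = z then axis i 1 else ?r i) :: real^'n^'n)
      + u$z * det ((\<chi> i. if i = z then w else ?r i) :: real^'n^'n)"
    using det_row_add[of z "\<lambda>i. axis i 1" "\<lambda>i. u$i *s w" ?r] det_row_mul[of z "u$z" "\<lambda>_. w" ?r]
    by (simp cong: if_cong)
  also have "((\<chi> i. if i = z then axis i 1 else ?r i) :: real^'n^'n) = (\<chi> i. ?r i)"
    using insert by (auto simp: vec_eq_iff)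
  also have "det ((\<chi> i. if i = z then w else ?r i) :: real^'n^'n) = w $ z"
    using det_rank_one_rows_replace_row[OF insert(1,2)] by simp
  finally show ?case using insert by (simp add: algebra_simps)
qed

lemma det_mat_1_add_outer_prod:
  fixes u w :: "real^'n::finite"
  shows "det (mat 1 + outer_prod u w) = 1 + u \<bullet> w"
proof -
  have "mat 1 + outer_prod u w = (\<chi> i. if i \<in> UNIV then axis i 1 + u$i *s w else axis i 1)"
    by (simp add: vec_eq_iff outer_prod_def mat_def axis_def)
  then show ?thesis using det_rank_one_rows[of UNIV u w] by (simp add: inner_vec_def)
qed

lemma det_add_outer_prod:
  fixes A :: "real^'n::finite^'n"
  shows "det (A + outer_prod (A *v u) w) = det A * (1 + u \<bullet> w)"
proof -
  have "A + outer_prod (A *v u) w = A ** (mat 1 + outer_prod u w)"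
    by (simp add: matrix_add_ldistrib matrix_mul_outer_prod)
  then show ?thesis by (simp add: det_mul det_mat_1_add_outer_prod)
qed

definition quad_form :: "real^'n^'n \<Rightarrow> real^'n \<Rightarrow> real" where
  "quad_form B \<xi> = \<xi> \<bullet> (B *v \<xi>)"

lemma inner_symmetric_matrix_vector:
  fixes B :: "real^'n::finite^'n"
  assumes "transpose B = B"
  shows "(B *v x) \<bullet> y = x \<bullet> (B *v y)"
proof -
  have "B *v x = x v* B"
    using transpose_matrix_vector[of B x] assms by simp
  then show ?thesis by (simp add: dot_lmul_matrix)
qed

lemma quad_form_add_scaleR:
  fixes B :: "real^'n::finite^'n"
  assumes "transpose B = B"
  shows "quad_form B (\<xi> + s *\<^sub>R e) = quad_form B \<xi> + 2 * s * ((B *v \<xi>) \<bullet> e) + s\<^sup>2 * quad_form B e"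
proof -
  have "e \<bullet> (B *v \<xi>) = (B *v \<xi>) \<bullet> e" "\<xi> \<bullet> (B *v e) = (B *v \<xi>) \<bullet> e"
    using inner_symmetric_matrix_vector[OF assms, of \<xi> e] by (simp_all add: inner_commute)
  then show ?thesis
    unfolding quad_form_def matrix_vector_right_distrib matrix_vector_mult_scaleR
    by (simp add: inner_add_left inner_add_right power2_eq_square algebra_simps)
qed

lemma has_real_derivative_quad_form_line:
  fixes B :: "real^'n::finite^'n"
  assumes "transpose B = B"
  shows "((\<lambda>s. quad_form B (\<xi> + s *\<^sub>R e)) has_real_derivative 2 * ((B *v \<xi>) \<bullet> e)) (at 0)"
  unfolding quad_form_add_scaleR[OF assms] by (auto intro!: derivative_eq_intros)

lemma has_real_derivative_matrix_vector_line:
  fixes B :: "real^'n::finite^'n"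
  shows "((\<lambda>s. (B *v (\<xi> + s *\<^sub>R e)) $ k) has_real_derivative (B *v e) $ k) (at 0)"
  unfolding matrix_vector_right_distrib matrix_vector_mult_scaleR
  by (auto intro!: derivative_eq_intros)

lemma partial_deriv_powr_quad_form:
  fixes B :: "real^'n::finite^'n"
  assumes "transpose B = B" "quad_form B \<xi> > 0"
  shows "partial_deriv k (\<lambda>\<xi>. quad_form B \<xi> powr p) \<xi> =
    2 * p * quad_form B \<xi> powr (p - 1) * (B *v \<xi>) $ k"
proof -
  have "((\<lambda>s. quad_form B (\<xi> + s *\<^sub>R axis k 1) powr p) has_real_derivative
      p * quad_form B (\<xi> + 0 *\<^sub>R axis k 1) powr (p - of_nat 1) * (2 * ((B *v \<xi>) \<bullet> axis k 1))) (at 0)"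
    using assms(2) by (intro DERIV_fun_powr has_real_derivative_quad_form_line assms(1)) simp
  then show ?thesis
    unfolding partial_deriv_def by (intro DERIV_imp_deriv) (simp add: inner_axis algebra_simps)
qed

lemma second_partial_deriv_powr_quad_form:
  fixes B :: "real^'n::finite^'n"
  assumes sym: "transpose B = B" and pos: "quad_form B \<xi> > 0"
  shows "partial_deriv j (partial_deriv k (\<lambda>\<xi>. quad_form B \<xi> powr p)) \<xi> =
    2 * p * (2 * (p - 1) * quad_form B \<xi> powr (p - 2) * (B *v \<xi>) $ j * (B *v \<xi>) $ k
             + quad_form B \<xi> powr (p - 1) * B $ j $ k)"
proof -
  let ?e = "axis j 1 :: real^'n"
  let ?Q = "\<lambda>s. quad_form B (\<xi> + s *\<^sub>R ?e)"
  let ?S = "{s. ?Q s > 0}"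
  have powr_deriv: "((\<lambda>s. ?Q s powr (p - 1)) has_real_derivative
      (p - 1) * ?Q 0 powr (p - 1 - of_nat 1) * (2 * ((B *v \<xi>) \<bullet> ?e))) (at 0)"
    using pos by (intro DERIV_fun_powr has_real_derivative_quad_form_line sym) simp
  have "((\<lambda>s. 2 * p * (?Q s powr (p - 1) * (B *v (\<xi> + s *\<^sub>R ?e)) $ k)) has_real_derivative
      2 * p * ((p - 1) * ?Q 0 powr (p - 1 - of_nat 1) * (2 * ((B *v \<xi>) \<bullet> ?e)) * (B *v (\<xi> + 0 *\<^sub>R ?e)) $ k
               + (B *v ?e) $ k * ?Q 0 powr (p - 1))) (at 0)"
    by (rule DERIV_cmult[OF DERIV_mult[OF powr_deriv has_real_derivative_matrix_vector_line]])
  moreover have "open ?S"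
    unfolding quad_form_add_scaleR[OF sym] by (intro open_Collect_less continuous_intros)
  moreover have "0 \<in> ?S" using pos by simp
  moreover have "2 * p * (?Q s powr (p - 1) * (B *v (\<xi> + s *\<^sub>R ?e)) $ k) =
      partial_deriv k (\<lambda>\<xi>. quad_form B \<xi> powr p) (\<xi> + s *\<^sub>R ?e)" if "s \<in> ?S" for s
    using that partial_deriv_powr_quad_form[OF sym, of "\<xi> + s *\<^sub>R ?e" k p] by simp
  ultimately have "((\<lambda>s. partial_deriv k (\<lambda>\<xi>. quad_form B \<xi> powr p) (\<xi> + s *\<^sub>R ?e)) has_real_derivative
      2 * p * ((p - 1) * ?Q 0 powr (p - 1 - of_nat 1) * (2 * ((B *v \<xi>) \<bullet> ?e)) * (B *v (\<xi> + 0 *\<^sub>R ?e)) $ k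
               + (B *v ?e) $ k * ?Q 0 powr (p - 1))) (at 0)"
    by (rule has_field_derivative_transform_within_open)
  moreover have "(B *v ?e) $ k = B $ j $ k"
    using sym by (metis column_def matrix_vector_mult_basis transpose_def vec_lambda_beta)
  moreover have "p - 1 - of_nat 1 = p - 2" by simp
  ultimately show ?thesis
    unfolding partial_deriv_def[of j] by (intro DERIV_imp_deriv) (simp add: inner_axis algebra_simps)
qed

lemma hessian_powr_quad_form:
  fixes B :: "real^'n::finite^'n"
  assumes sym: "transpose B = B" and pos: "quad_form B \<xi> > 0"
  shows "hessian (\<lambda>\<xi>. quad_form B \<xi> powr p) \<xi> =
    (2 * p * quad_form B \<xi> powr (p - 1)) *\<^sub>R
      (B + (2 * (p - 1) / quad_form B \<xi>) *\<^sub>R outer_prod (B *v \<xi>) (B *v \<xi>))"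
proof -
  have "quad_form B \<xi> powr (p - 2) = quad_form B \<xi> powr (p - 1) / quad_form B \<xi>"
    using pos powr_diff[of "quad_form B \<xi>" "p - 1" 1] by simp
  then show ?thesis
    by (simp add: vec_eq_iff hessian_def second_partial_deriv_powr_quad_form[OF sym pos]
        outer_prod_def algebra_simps)
qed

lemma det_hessian_powr_quad_form:
  fixes B :: "real^'n::finite^'n"
  assumes sym: "transpose B = B" and pos: "quad_form B \<xi> > 0"
  shows "det (hessian (\<lambda>\<xi>. quad_form B \<xi> powr p) \<xi>) =
    (2 * p * quad_form B \<xi> powr (p - 1)) ^ CARD('n) * (2 * p - 1) * det B"
proof -
  let ?c = "2 * (p - 1) / quad_form B \<xi>"
  have "B + ?c *\<^sub>R outer_prod (B *v \<xi>) (B *v \<xi>) = B + outer_prod (B *v (?c *\<^sub>R \<xi>)) (B *v \<xi>)"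
    by (simp add: scaleR_outer_prod matrix_vector_mult_scaleR)
  moreover have "1 + (?c *\<^sub>R \<xi>) \<bullet> (B *v \<xi>) = 2 * p - 1"
    using pos by (simp add: quad_form_def[symmetric] field_simps)
  ultimately show ?thesis
    by (simp add: hessian_powr_quad_form[OF sym pos] det_scaleR det_add_outer_prod)
qed

definition symbol_matrix :: "real \<Rightarrow> real^'n \<Rightarrow> real^'n^'n::finite" where
  "symbol_matrix \<alpha> g = \<alpha>\<^sup>2 *\<^sub>R ((1 + (norm g)\<^sup>2) *\<^sub>R mat 1 - outer_prod g g)"

lemma transpose_symbol_matrix: "transpose (symbol_matrix \<alpha> g) = symbol_matrix \<alpha> g"
  by (simp add: symbol_matrix_def transpose_def outer_prod_def mat_def vec_eq_iff mult.commute)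

lemma quad_form_symbol_matrix:
  "quad_form (symbol_matrix \<alpha> g) \<xi> = \<alpha>\<^sup>2 * ((1 + (norm g)\<^sup>2) * (norm \<xi>)\<^sup>2 - (\<xi> \<bullet> g)\<^sup>2)"
  by (simp add: quad_form_def symbol_matrix_def scaleR_matrix_vector_assoc[symmetric]
      matrix_vector_mult_diff_rdistrib outer_prod_mult_vec inner_diff_right dot_square_norm
      power2_eq_square inner_commute)

lemma det_symbol_matrix:
  fixes g :: "real^'n::finite"
  shows "det (symbol_matrix \<alpha> g) = (\<alpha>\<^sup>2) ^ CARD('n) * (1 + (norm g)\<^sup>2) ^ (CARD('n) - 1)"
proof -
  let ?h = "1 + (norm g)\<^sup>2"
  let ?A = "?h *\<^sub>R mat 1 :: real^'n^'n"
  have h: "?h > 0" by (simp add: add_pos_nonneg)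
  have "?h *\<^sub>R mat 1 - outer_prod g g = ?A + outer_prod (?A *v (- g /\<^sub>R ?h)) g"
    using h by (simp add: scaleR_matrix_vector_assoc[symmetric] outer_prod_def vec_eq_iff)
  then have "det (?h *\<^sub>R mat 1 - outer_prod g g) = det ?A * (1 + (- g /\<^sub>R ?h) \<bullet> g)"
    by (simp only: det_add_outer_prod)
  also have "\<dots> = ?h ^ CARD('n) * (1 - (norm g)\<^sup>2 / ?h)"
    by (simp add: det_scaleR power2_norm_eq_inner divide_inverse mult.commute)
  also have "\<dots> = ?h ^ CARD('n) / ?h"
    using h by (simp add: field_simps)
  also have "\<dots> = ?h ^ (CARD('n) - 1)"
    using h by (simp add: power_diff)
  finally show ?thesis
    by (simp add: symbol_matrix_def det_scaleR)
qed

lemma quad_form_symbol_matrix_bounds: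
  "\<alpha>\<^sup>2 * (norm \<xi>)\<^sup>2 \<le> quad_form (symbol_matrix \<alpha> g) \<xi>"
  "quad_form (symbol_matrix \<alpha> g) \<xi> \<le> \<alpha>\<^sup>2 * (1 + (norm g)\<^sup>2) * (norm \<xi>)\<^sup>2"
proof -
  have "(\<xi> \<bullet> g)\<^sup>2 \<le> (norm \<xi>)\<^sup>2 * (norm g)\<^sup>2"
    using Cauchy_Schwarz_ineq[of \<xi> g] by (simp add: power2_norm_eq_inner)
  then show "\<alpha>\<^sup>2 * (norm \<xi>)\<^sup>2 \<le> quad_form (symbol_matrix \<alpha> g) \<xi>"
    unfolding quad_form_symbol_matrix by (intro mult_left_mono) (auto simp: algebra_simps)
  show "quad_form (symbol_matrix \<alpha> g) \<xi> \<le> \<alpha>\<^sup>2 * (1 + (norm g)\<^sup>2) * (norm \<xi>)\<^sup>2"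
    unfolding quad_form_symbol_matrix by (simp add: mult_left_mono mult.assoc)
qed

lemma abs_det_hessian_quarter_power_ge:
  fixes g \<xi> :: "real^'n::finite"
  assumes "0 < c" "c \<le> \<alpha>" "\<bar>\<alpha>\<bar> \<le> M" "norm g \<le> M" "\<xi> \<noteq> 0" "norm \<xi> \<le> R"
  shows "(((1 + M\<^sup>2)\<^sup>2 * R\<^sup>2) powr (-3/4) / 2) ^ CARD('n) * (c\<^sup>2) ^ CARD('n) / 2
    \<le> \<bar>det (hessian (\<lambda>\<xi>. quad_form (symbol_matrix \<alpha> g) \<xi> powr (1/4)) \<xi>)\<bar>"
proof -
  let ?Q = "quad_form (symbol_matrix \<alpha> g) \<xi>"
  let ?K = "(1 + M\<^sup>2)\<^sup>2 * R\<^sup>2"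
  let ?h = "1 + (norm g)\<^sup>2"
  let ?d = "CARD('n)"
  have "0 < \<alpha>\<^sup>2 * (norm \<xi>)\<^sup>2" using assms by simp
  then have Q_pos: "0 < ?Q" using quad_form_symbol_matrix_bounds(1) by (rule less_le_trans)
  have "\<alpha>\<^sup>2 \<le> M\<^sup>2" "(norm g)\<^sup>2 \<le> M\<^sup>2" "(norm \<xi>)\<^sup>2 \<le> R\<^sup>2"
    using assms by (auto intro!: power_mono)
  then have "\<alpha>\<^sup>2 \<le> 1 + M\<^sup>2" "?h \<le> 1 + M\<^sup>2" "(norm \<xi>)\<^sup>2 \<le> R\<^sup>2"
    by auto
  then have "\<alpha>\<^sup>2 * ?h * (norm \<xi>)\<^sup>2 \<le> ?K"
    by (auto simp: power2_eq_square intro!: mult_mono)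
  then have Q_le: "?Q \<le> ?K" using quad_form_symbol_matrix_bounds(2) by (rule order_trans[rotated])
  have powr_le: "(?K powr (-3/4) / 2) ^ ?d \<le> (?Q powr (-3/4) / 2) ^ ?d"
    using Q_pos Q_le by (intro power_mono divide_right_mono powr_mono2') auto
  have "(c\<^sup>2) ^ ?d \<le> (\<alpha>\<^sup>2) ^ ?d" using assms by (intro power_mono) auto
  also have "\<dots> \<le> (\<alpha>\<^sup>2) ^ ?d * ?h ^ (?d - 1)" by (simp add: mult_le_cancel_left1)
  finally have det_ge: "(c\<^sup>2) ^ ?d \<le> (\<alpha>\<^sup>2) ^ ?d * ?h ^ (?d - 1)" .
  have "det (hessian (\<lambda>\<xi>. quad_form (symbol_matrix \<alpha> g) \<xi> powr (1/4)) \<xi>) =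
      (?Q powr (-3/4) / 2) ^ ?d * (-1/2) * ((\<alpha>\<^sup>2) ^ ?d * ?h ^ (?d - 1))"
    using det_hessian_powr_quad_form[OF transpose_symbol_matrix Q_pos, of "1/4"]
    by (simp add: det_symbol_matrix)
  then have "\<bar>det (hessian (\<lambda>\<xi>. quad_form (symbol_matrix \<alpha> g) \<xi> powr (1/4)) \<xi>)\<bar> =
      (?Q powr (-3/4) / 2) ^ ?d * ((\<alpha>\<^sup>2) ^ ?d * ?h ^ (?d - 1)) / 2"
    by (simp add: abs_mult)
  moreover have "(?K powr (-3/4) / 2) ^ ?d * (c\<^sup>2) ^ ?d / 2
      \<le> (?Q powr (-3/4) / 2) ^ ?d * ((\<alpha>\<^sup>2) ^ ?d * ?h ^ (?d - 1)) / 2"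
    by (intro divide_right_mono mult_mono powr_le det_ge) auto
  ultimately show ?thesis by simp
qed

lemma gamma_sym_eq_powr_quad_form:
  "gamma_sym a \<eta> t x = (\<lambda>\<xi>. quad_form (symbol_matrix (a t x) (grad (\<eta> t) x)) \<xi> powr (1/4))"
  by (simp add: fun_eq_iff gamma_sym_def U_sym_def quad_form_symbol_matrix)

theorem corollary3p7:
  fixes I :: "real set" and a \<eta> :: "real \<Rightarrow> real^'d::finite \<Rightarrow> real" and c M :: real
  assumes "is_interval I"
    and "\<forall>t\<in>I. \<forall>x. \<eta> t differentiable (at x)"
    and "\<forall>t\<in>I. \<forall>x. norm (grad (\<eta> t) x) \<le> M"
    and "\<forall>t\<in>I. \<forall>x. \<bar>a t x\<bar> \<le> M"
    and "c > 0"
    and "\<forall>t\<in>I. \<forall>x. a t x \<ge> c"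
  shows "\<exists>c0>0. \<forall>t\<in>I. \<forall>x. \<forall>\<xi>::real^'d. 1/2 \<le> norm \<xi> \<and> norm \<xi> \<le> 2 \<longrightarrow>
            \<bar>det (hessian (gamma_sym a \<eta> t x) \<xi>)\<bar> \<ge> c0"
proof -
  let ?c0 = "(((1 + M\<^sup>2)\<^sup>2 * 2\<^sup>2) powr (-3/4) / 2) ^ CARD('d) * (c\<^sup>2) ^ CARD('d) / 2"
  have "0 < 1 + M\<^sup>2" by (simp add: add_pos_nonneg)
  then have "?c0 > 0" using \<open>c > 0\<close> by simp
  moreover have "?c0 \<le> \<bar>det (hessian (gamma_sym a \<eta> t x) \<xi>)\<bar>"
    if "t \<in> I" "1/2 \<le> norm \<xi>" "norm \<xi> \<le> 2" for t x and \<xi> :: "real^'d"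
    unfolding gamma_sym_eq_powr_quad_form
    using assms that by (intro abs_det_hessian_quarter_power_ge) auto
  ultimately show ?thesis by blast
qed

end
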